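(* (Regression adjustment identification.) Assume MMG and PAI with respect to $G$, and let $s_1,\dots,s_J$ be all connected subsets of $G$ containing vertex $1$. For every pattern $r$ with $r_1=0$ and $\psi(\bar r)=s_j$, $$\mathbb E[X_1 I(R=r)]=\mathbb E\big[m_{s_j}(X_{N_G(s_j)})I(R=r)\big],$$ and consequently $$\mathbb E[X_1]=\mathbb E[X_1 R_1]+\sum_{j=1}^J\mathbb E\big[m_{s_j}(X_{N_G(s_j)})\,I(\psi(\bar R)=s_j)\big].$$
   Context: $X=(X_1,\dots,X_d)$ with $\mathbb E|X_1|<\infty$, $R\in\{0,1\}^d$ with $R_j=1$ iff $X_j$ observed. Binary vectors are identified with index sets; $\bar r=\mathbf 1_d-r$. $G$ is an undirected graph on $\{1,\dots,d\}$; for an index set $U$, $N_G(U)$ is the set of vertices outside $U$ adjacent to $U$ and $\bar N_G(U)=U\cup N_G(U)$; "$R_U=1$" means $R_k=1$ for all $k\in U$. For $v\in\{0,1\}^d$ with $v_1=1$, $\psi(v)$ is the vertex set of the connected component containing vertex 1 in the subgraph of $G$ induced on $\{k:v_k=1\}$. $m_{s_j}(x_{N_G(s_j)})=\mathbb E[X_1\mid X_{N_G(s_j)}=x_{N_G(s_j)},R_{\bar N_G(s_j)}=1]$. MMG: for each pattern $r$ with $P(R=r)>0$ and connected components $s_1,\dots,s_K$ of the missing set $\{k:r_k=0\}$, $p(x_{\bar r}\mid x_r,R=r)=\prod_k p(x_{s_k}\mid x_{N_G(s_k)},R=r)$. PAI: $p(x_{s_k}\mid x_{N_G(s_k)},R=r)=p(x_{s_k}\mid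 x_{N_G(s_k)},R_{\bar N_G(s_k)}=1)$. Positivity assumed. *)

theory Defs
  imports "HOL-Probability.Probability"
begin

text \<open>Vertices are V = {1..d}; vertex 1 is the outcome. Patterns r are
  index sets of observed coordinates (r = {k. R_k = 1}), subsets of V.\<close>

definition ind_adj :: "(nat \<Rightarrow> nat \<Rightarrow> bool) \<Rightarrow> nat set \<Rightarrow> nat \<Rightarrow> nat \<Rightarrow> bool" where
  "ind_adj G S a b \<longleftrightarrow> a \<in> S \<and> b \<in> S \<and> G a b"

definition conn_set :: "(nat \<Rightarrow> nat \<Rightarrow> bool) \<Rightarrow> nat set \<Rightarrow> bool" where
  "conn_set G S \<longleftrightarrow> S \<noteq> {} \<and> (\<forall>u\<in>S. \<forall>v\<in>S. (ind_adj G S)\<^sup>*\<^sup>* u v)"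

definition comp_of :: "(nat \<Rightarrow> nat \<Rightarrow> bool) \<Rightarrow> nat set \<Rightarrow> nat \<Rightarrow> nat set" where
  "comp_of G S v = {w \<in> S. (ind_adj G S)\<^sup>*\<^sup>* v w}"

definition components :: "(nat \<Rightarrow> nat \<Rightarrow> bool) \<Rightarrow> nat set \<Rightarrow> nat set set" where
  "components G S = comp_of G S ` S"

definition nbr :: "nat set \<Rightarrow> (nat \<Rightarrow> nat \<Rightarrow> bool) \<Rightarrow> nat set \<Rightarrow> nat set" where
  "nbr V G U = {v \<in> V - U. \<exists>u\<in>U. G u v}"

text \<open>If 1 is not in v, psi is undefined in the paper; we return {},
  which is never a connected set, so the indicator I(psi(bar R) = s) is 0.\<close>
definition psi :: "(nat \<Rightarrow> nat \<Rightarrow> bool) \<Rightarrow> nat set \<Rightarrow> nat set" where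
  "psi G v = (if 1 \<in> v then comp_of G v 1 else {})"

definition dataM :: "nat set \<Rightarrow> real measure \<Rightarrow> (nat \<Rightarrow> real) measure" where
  "dataM V \<nu> = PiM V (\<lambda>_. \<nu>)"

text \<open>Joint density of (X_A, R in E) at x_A, obtained from the joint density f of
  (X, R) by integrating out X_{V-A} and summing over patterns in E.\<close>
definition marg :: "nat set \<Rightarrow> real measure \<Rightarrow> ((nat \<Rightarrow> real) \<Rightarrow> nat set \<Rightarrow> real)
    \<Rightarrow> nat set \<Rightarrow> nat set set \<Rightarrow> (nat \<Rightarrow> real) \<Rightarrow> real" where
  "marg V \<nu> f A E x =
     (\<integral>y. (\<Sum>r\<in>E. f (merge A (V - A) (x, y)) r) \<partial>PiM (V - A) (\<lambda>_. \<nu>))"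

definition cond_dens :: "nat set \<Rightarrow> real measure \<Rightarrow> ((nat \<Rightarrow> real) \<Rightarrow> nat set \<Rightarrow> real)
    \<Rightarrow> nat set \<Rightarrow> nat set \<Rightarrow> nat set set \<Rightarrow> (nat \<Rightarrow> real) \<Rightarrow> real" where
  "cond_dens V \<nu> f B A E x = marg V \<nu> f (A \<union> B) E x / marg V \<nu> f A E x"

text \<open>The event R_U = 1, as a set of patterns.\<close>
definition obs_all :: "nat set \<Rightarrow> nat set \<Rightarrow> nat set set" where
  "obs_all V U = {r. r \<subseteq> V \<and> U \<subseteq> r}"

text \<open>m_s(x_{N(s)}) = E[X_1 | X_{N(s)} = x_{N(s)}, R_{s \<union> N(s)} = 1].\<close>
definition mreg :: "nat set \<Rightarrow> real measure \<Rightarrow> ((nat \<Rightarrow> real) \<Rightarrow> nat set \<Rightarrow> real)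
    \<Rightarrow> (nat \<Rightarrow> nat \<Rightarrow> bool) \<Rightarrow> nat set \<Rightarrow> (nat \<Rightarrow> real) \<Rightarrow> real" where
  "mreg V \<nu> f G s x =
     (let N = nbr V G s; E = obs_all V (s \<union> N) in
      \<integral>t. t * cond_dens V \<nu> f {1} N E (x(1 := t)) \<partial>\<nu>)"

definition pos_pattern :: "nat set \<Rightarrow> real measure \<Rightarrow> ((nat \<Rightarrow> real) \<Rightarrow> nat set \<Rightarrow> real)
    \<Rightarrow> nat set \<Rightarrow> bool" where
  "pos_pattern V \<nu> f r \<longleftrightarrow> (\<integral>\<^sup>+x. ennreal (f x r) \<partial>dataM V \<nu>) > 0"

definition MMG :: "nat set \<Rightarrow> real measure \<Rightarrow> ((nat \<Rightarrow> real) \<Rightarrow> nat set \<Rightarrow> real)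
    \<Rightarrow> (nat \<Rightarrow> nat \<Rightarrow> bool) \<Rightarrow> bool" where
  "MMG V \<nu> f G \<longleftrightarrow> (\<forall>r. r \<subseteq> V \<and> pos_pattern V \<nu> f r \<longrightarrow>
     (AE x in dataM V \<nu>. cond_dens V \<nu> f (V - r) r {r} x =
        (\<Prod>s\<in>components G (V - r). cond_dens V \<nu> f s (nbr V G s) {r} x)))"

definition PAI :: "nat set \<Rightarrow> real measure \<Rightarrow> ((nat \<Rightarrow> real) \<Rightarrow> nat set \<Rightarrow> real)
    \<Rightarrow> (nat \<Rightarrow> nat \<Rightarrow> bool) \<Rightarrow> bool" where
  "PAI V \<nu> f G \<longleftrightarrow> (\<forall>r. r \<subseteq> V \<and> pos_pattern V \<nu> f r \<longrightarrow>
     (\<forall>s\<in>components G (V - r).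
       (AE x in dataM V \<nu>. cond_dens V \<nu> f s (nbr V G s) {r} x =
          cond_dens V \<nu> f s (nbr V G s) (obs_all V (s \<union> nbr V G s)) x)))"

end

theory Submission
  imports Defs
begin

text \<open>Fix a pattern r with X_1 missing, let s = psi(V - r) be the missing component of vertex 1
  and N = N_G(s). Integrating the density of (X, R = r) first over the coordinates outside N \<union> s,
  then over s and finally over N (Fubini) writes E[X_1 I(R = r)] as the integral over x_N of the
  conditional mean of X_1 given X_N = x_N and R = r, weighted by the density of (X_N, R = r).
  By PAI the conditional density of X_s given X_N is the same under R = r as under
  R_(s \<union> N) = 1, so this conditional mean is m_s(x_N), and reassembling the integral gives
  E[m_s(X_N) I(R = r)]. Summing over all patterns, grouped by psi(V - r), gives the decomposition
  of E[X_1].\<close>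

definition integrate_out :: "real measure \<Rightarrow> nat set \<Rightarrow> nat set \<Rightarrow> ((nat \<Rightarrow> real) \<Rightarrow> real)
    \<Rightarrow> (nat \<Rightarrow> real) \<Rightarrow> real" where
  "integrate_out \<nu> W I h u = (\<integral>w. h (merge I (W - I) (u, w)) \<partial>PiM (W - I) (\<lambda>_. \<nu>))"

text \<open>E[X_i | X_N = x_N] for the unnormalised density k of the coordinates W; it is 0 wherever
  the marginal density of x_N vanishes (division by zero).\<close>

definition cond_mean :: "real measure \<Rightarrow> nat set \<Rightarrow> nat \<Rightarrow> nat set \<Rightarrow> ((nat \<Rightarrow> real) \<Rightarrow> real)
    \<Rightarrow> (nat \<Rightarrow> real) \<Rightarrow> real" where
  "cond_mean \<nu> W i N k x =
     (\<integral>t. t * (integrate_out \<nu> W (insert i N) k (x(i := t)) / integrate_out \<nu> W N k (x(i := t))) \<partial>\<nu>)"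

lemma integrate_out_restrict [simp]: "integrate_out \<nu> W I h (restrict x I) = integrate_out \<nu> W I h x"
  unfolding integrate_out_def by simp

lemma integrate_out_cong_restrict:
  "restrict x I = restrict y I \<Longrightarrow> integrate_out \<nu> W I h x = integrate_out \<nu> W I h y"
  by (metis integrate_out_restrict)

lemma cond_mean_restrict: "cond_mean \<nu> W i N k (restrict x N) = cond_mean \<nu> W i N k x"
proof -
  have "integrate_out \<nu> W J k ((restrict x N)(i := t)) = integrate_out \<nu> W J k (x(i := t))"
    if "J \<subseteq> insert i N" for t J
    by (rule integrate_out_cong_restrict) (use that in \<open>auto simp: fun_eq_iff restrict_def\<close>)
  from this[OF order_refl] this[OF subset_insertI] show ?thesis
    unfolding cond_mean_def by auto
qed

lemma integral_mult_eq_of_AE_ratio: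
  fixes a P Q :: "'a \<Rightarrow> real"
  assumes P_nonneg: "\<And>v. P v \<ge> 0" and P_int: "integrable M P" and P_total: "integral\<^sup>L M P = c"
    and ratio: "AE v in M. P v / c = Q v / c'"
    and meas: "a \<in> borel_measurable M" "P \<in> borel_measurable M" "Q \<in> borel_measurable M"
  shows "(\<integral>v. a v * P v \<partial>M) = c / c' * (\<integral>v. a v * Q v \<partial>M)"
proof (cases "c = 0")
  case True
  then have "AE v in M. P v = 0"
    using integral_nonneg_eq_0_iff_AE[OF P_int] P_nonneg P_total by simp
  then have "(\<integral>v. a v * P v \<partial>M) = 0" by (intro integral_eq_zero_AE) auto
  with True show ?thesis by simp
next
  case False
  have "AE v in M. a v * P v = c / c' * (a v * Q v)"
    using ratio by eventually_elim (use False in \<open>simp add: field_simps\<close>)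
  then have "(\<integral>v. a v * P v \<partial>M) = (\<integral>v. c / c' * (a v * Q v) \<partial>M)"
    by (rule integral_cong_AE[rotated 2]) (use meas in auto)
  then show ?thesis by simp
qed

locale product_borel =
  fixes \<nu> :: "real measure"
  assumes nu_sigma_finite: "sigma_finite_measure \<nu>" and sets_nu: "sets \<nu> = sets borel"
begin

sublocale P: product_sigma_finite "\<lambda>_. \<nu>"
  using nu_sigma_finite by (simp add: product_sigma_finite_def)

abbreviation Pnu :: "nat set \<Rightarrow> (nat \<Rightarrow> real) measure" where
  "Pnu I \<equiv> PiM I (\<lambda>_. \<nu>)"

lemma measurable_snd_borel [measurable]: "snd \<in> borel_measurable (M \<Otimes>\<^sub>M \<nu>)"
  using measurable_snd[of M \<nu>] by (simp add: measurable_cong_sets[OF refl sets_nu])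

lemma measurable_coordinate: "i \<in> I \<Longrightarrow> (\<lambda>x. x i) \<in> borel_measurable (Pnu I)"
  using measurable_component_singleton[of i I "\<lambda>_. \<nu>"]
  by (simp add: measurable_cong_sets[OF refl sets_nu])

lemma Fubini_merge:
  fixes g :: "(nat \<Rightarrow> real) \<Rightarrow> real"
  assumes IJ: "I \<inter> J = {}" "finite I" "finite J" and g: "integrable (Pnu (I \<union> J)) g"
  shows "AE u in Pnu I. integrable (Pnu J) (\<lambda>v. g (merge I J (u, v)))"
    and "integrable (Pnu I) (\<lambda>u. \<integral>v. g (merge I J (u, v)) \<partial>Pnu J)"
    and "integral\<^sup>L (Pnu (I \<union> J)) g = (\<integral>u. (\<integral>v. g (merge I J (u, v)) \<partial>Pnu J) \<partial>Pnu I)"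
proof -
  interpret I: finite_product_sigma_finite "\<lambda>_. \<nu>" I by standard fact
  interpret J: finite_product_sigma_finite "\<lambda>_. \<nu>" J by standard fact
  interpret pair_sigma_finite "Pnu I" "Pnu J" ..
  have "integrable (Pnu I \<Otimes>\<^sub>M Pnu J) (\<lambda>x. g (merge I J x))"
    by (rule integrable_distr[OF measurable_merge]) (simp add: P.distr_merge[OF IJ] g)
  from AE_integrable_fst'[OF this] integrable_fst'[OF this]
  show "AE u in Pnu I. integrable (Pnu J) (\<lambda>v. g (merge I J (u, v)))"
    and "integrable (Pnu I) (\<lambda>u. \<integral>v. g (merge I J (u, v)) \<partial>Pnu J)"
    by simp_all
  show "integral\<^sup>L (Pnu (I \<union> J)) g = (\<integral>u. (\<integral>v. g (merge I J (u, v)) \<partial>Pnu J) \<partial>Pnu I)"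
    by (rule P.product_integral_fold[OF IJ g])
qed

lemma AE_merge:
  assumes IJ: "I \<inter> J = {}" "finite I" "finite J" and Q: "AE x in Pnu (I \<union> J). Q x"
  shows "AE u in Pnu I. AE v in Pnu J. Q (merge I J (u, v))"
proof -
  interpret I: finite_product_sigma_finite "\<lambda>_. \<nu>" I by standard fact
  interpret J: finite_product_sigma_finite "\<lambda>_. \<nu>" J by standard fact
  interpret pair_sigma_finite "Pnu I" "Pnu J" ..
  have "AE x in Pnu I \<Otimes>\<^sub>M Pnu J. Q (merge I J x)"
    by (rule AE_distrD[OF measurable_merge], unfold P.distr_merge[OF IJ], rule Q)
  from AE_pair[OF this] show ?thesis by simp
qed

lemma emeasure_space_Pnu: "finite J \<Longrightarrow> emeasure (Pnu J) (space (Pnu J)) = emeasure \<nu> (space \<nu>) ^ card J"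
  unfolding space_PiM by (subst P.emeasure_PiM) auto

lemma nu_nontrivial_if_integral_nonzero:
  assumes "finite I" "I \<noteq> {}" "integral\<^sup>L (Pnu I) g \<noteq> 0"
  shows "emeasure \<nu> (space \<nu>) \<noteq> 0"
proof
  assume "emeasure \<nu> (space \<nu>) = 0"
  with assms(1,2) have "ae_filter (Pnu I) = bot"
    by (simp add: ae_filter_eq_bot_iff emeasure_space_Pnu card_gt_0_iff)
  then have "AE x in Pnu I. g x = 0" by (metis eventually_bot)
  with assms(3) show False by (simp add: integral_eq_zero_AE)
qed

lemma AE_restrict:
  assumes W: "finite W" and IW: "I \<subseteq> W" and nontrivial: "emeasure \<nu> (space \<nu>) \<noteq> 0"
    and Q: "AE x in Pnu W. Q (restrict x I)"
  shows "AE u in Pnu I. Q u"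
proof -
  have fin: "finite I" "finite (W - I)" using W IW finite_subset by auto
  have WI: "I \<union> (W - I) = W" using IW by auto
  have "AE u in Pnu I. AE v in Pnu (W - I). Q (restrict (merge I (W - I) (u, v)) I)"
    by (rule AE_merge[OF _ fin, where Q = "\<lambda>x. Q (restrict x I)"]) (unfold WI, auto intro: Q)
  then show ?thesis
  proof (rule AE_mp[OF _ AE_I2[OF impI]])
    fix u assume u: "u \<in> space (Pnu I)"
      and "AE v in Pnu (W - I). Q (restrict (merge I (W - I) (u, v)) I)"
    then have "AE v in Pnu (W - I). Q u" by (simp add: space_PiM)
    moreover have "emeasure (Pnu (W - I)) (space (Pnu (W - I))) \<noteq> 0"
      using nontrivial fin(2) by (simp add: emeasure_space_Pnu)
    ultimately show "Q u"
      by (metis ae_filter_eq_bot_iff eventually_False)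
  qed
qed

lemma measurable_integrate_out:
  assumes W: "finite W" and IW: "I \<subseteq> W"
    and h: "h \<in> borel_measurable (Pnu W)" and g: "g \<in> measurable M (Pnu I)"
  shows "(\<lambda>x. integrate_out \<nu> W I h (g x)) \<in> borel_measurable M"
proof -
  interpret J: finite_product_sigma_finite "\<lambda>_. \<nu>" "W - I" by standard (use W in auto)
  have "(\<lambda>(x, w). merge I (W - I) (g x, w)) \<in> measurable (M \<Otimes>\<^sub>M Pnu (W - I)) (Pnu (I \<union> (W - I)))"
    using g by measurable
  then have "(\<lambda>(x, w). h (merge I (W - I) (g x, w))) \<in> borel_measurable (M \<Otimes>\<^sub>M Pnu (W - I))"
    using h IW by (auto intro: measurable_compose_rev simp: case_prod_beta Un_absorb1)
  then show ?thesis
    unfolding integrate_out_def by (rule J.borel_measurable_lebesgue_integral)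
qed

lemma integrate_out_nonneg: "(\<And>x. h x \<ge> 0) \<Longrightarrow> integrate_out \<nu> W I h u \<ge> 0"
  unfolding integrate_out_def by (intro integral_nonneg_AE) auto

lemma integrate_out_singleton:
  assumes i: "i \<notin> N" and u: "u \<in> space (Pnu N)" and g: "g \<in> borel_measurable (Pnu (insert i N))"
  shows "integrate_out \<nu> (insert i N) N g u = (\<integral>t. g (u(i := t)) \<partial>\<nu>)"
proof -
  have "merge N {i} (u, e) = u(i := e i)" for e
    using u i by (auto simp: fun_eq_iff merge_def space_PiM PiE_def extensional_def)
  then have "integrate_out \<nu> (insert i N) N g u = (\<integral>e. (\<lambda>t. g (u(i := t))) (e i) \<partial>Pnu {i})"
    unfolding integrate_out_def using i by (simp add: insert_Diff_if)
  also have "\<dots> = (\<integral>t. g (u(i := t)) \<partial>\<nu>)"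
  proof (rule P.product_integral_singleton)
    have "(\<lambda>t. u(i := t)) \<in> measurable \<nu> (Pnu (insert i N))"
      using measurable_component_update[OF u i] .
    then show "(\<lambda>t. g (u(i := t))) \<in> borel_measurable \<nu>"
      using g by (rule measurable_compose)
  qed
  finally show ?thesis .
qed

lemma integrate_out_integrate_out:
  assumes W: "finite W" and KI: "K \<subseteq> I" and IW: "I \<subseteq> W"
    and a: "\<And>x. a x = a (restrict x I)" and int: "integrable (Pnu W) (\<lambda>x. a x * h x)"
  shows "AE u in Pnu K.
           integrable (Pnu (I - K))
             (\<lambda>v. a (merge K (I - K) (u, v)) * integrate_out \<nu> W I h (merge K (I - K) (u, v)))
         \<and> integrate_out \<nu> I K (\<lambda>x. a x * integrate_out \<nu> W I h x) u
           = integrate_out \<nu> W K (\<lambda>x. a x * h x) u"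
proof -
  have fin: "finite K" "finite (W - K)" "finite (I - K)" "finite (W - I)"
    using W KI IW by (meson finite_Diff finite_subset subset_trans)+
  have WK: "K \<union> (W - K) = W" and IKW: "(I - K) \<union> (W - I) = W - K" using KI IW by auto
  have "AE u in Pnu K.
      integrable (Pnu (W - K)) (\<lambda>y. a (merge K (W - K) (u, y)) * h (merge K (W - K) (u, y)))"
    by (rule Fubini_merge(1)[OF _ fin(1,2)]) (use int WK in auto)
  then show ?thesis
  proof eventually_elim
    case (elim u)
    define F where "F y = a (merge K (W - K) (u, y)) * h (merge K (W - K) (u, y))" for y
    have intF: "integrable (Pnu ((I - K) \<union> (W - I))) F"
      using elim unfolding F_def IKW .
    have "F (merge (I - K) (W - I) (v, z)) =
        a (merge K (I - K) (u, v)) * h (merge I (W - I) (merge K (I - K) (u, v), z))" for v z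
    proof -
      have "merge K (W - K) (u, merge (I - K) (W - I) (v, z))
          = merge I (W - I) (merge K (I - K) (u, v), z)"
        using KI IW by (auto simp: merge_def fun_eq_iff)
      moreover have "a (merge I (W - I) (merge K (I - K) (u, v), z)) = a (merge K (I - K) (u, v))"
        by (subst a, subst (2) a) simp
      ultimately show ?thesis unfolding F_def by simp
    qed
    then have inner: "(\<integral>z. F (merge (I - K) (W - I) (v, z)) \<partial>Pnu (W - I)) =
        a (merge K (I - K) (u, v)) * integrate_out \<nu> W I h (merge K (I - K) (u, v))" for v
      unfolding integrate_out_def by simp
    have "(I - K) \<inter> (W - I) = {}" by auto
    from Fubini_merge(2,3)[OF this fin(3,4) intF] show ?case
      unfolding inner IKW by (simp add: integrate_out_def F_def[abs_def])
  qed
qed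

lemma integral_integrate_out:
  assumes W: "finite W" and IW: "I \<subseteq> W"
    and a: "\<And>x. a x = a (restrict x I)" and int: "integrable (Pnu W) (\<lambda>x. a x * h x)"
  shows "integrable (Pnu I) (\<lambda>u. a u * integrate_out \<nu> W I h u)"
    and "(\<integral>x. a x * h x \<partial>Pnu W) = (\<integral>u. a u * integrate_out \<nu> W I h u \<partial>Pnu I)"
proof -
  have fin: "finite I" "finite (W - I)" using W IW finite_subset by auto
  have disj: "I \<inter> (W - I) = {}" by auto
  have WI: "I \<union> (W - I) = W" using IW by auto
  have "a (merge I (W - I) (u, y)) = a u" for u y
    by (subst a, subst (2) a) simp
  then have inner: "(\<integral>y. a (merge I (W - I) (u, y)) * h (merge I (W - I) (u, y)) \<partial>Pnu (W - I))
      = a u * integrate_out \<nu> W I h u" for u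
    unfolding integrate_out_def by simp
  from Fubini_merge(2,3)[OF disj fin, of "\<lambda>x. a x * h x"] int
  show "integrable (Pnu I) (\<lambda>u. a u * integrate_out \<nu> W I h u)"
    and "(\<integral>x. a x * h x \<partial>Pnu W) = (\<integral>u. a u * integrate_out \<nu> W I h u \<partial>Pnu I)"
    unfolding inner WI by simp_all
qed

lemma integrable_of_integrable_integrate_out:
  assumes W: "finite W" and IW: "I \<subseteq> W"
    and h: "h \<in> borel_measurable (Pnu W)" and h_nonneg: "\<And>x. h x \<ge> 0" and h_int: "integrable (Pnu W) h"
    and a: "a \<in> borel_measurable (Pnu W)" "\<And>x. a x = a (restrict x I)"
    and int: "integrable (Pnu I) (\<lambda>u. a u * integrate_out \<nu> W I h u)"
  shows "integrable (Pnu W) (\<lambda>x. a x * h x)"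
proof -
  have fin: "finite I" "finite (W - I)" using W IW finite_subset by auto
  have disj: "I \<inter> (W - I) = {}" by auto
  have WI: "I \<union> (W - I) = W" using IW by auto
  have a_merge: "a (merge I (W - I) (u, y)) = a u" for u y
    by (subst a(2), subst (2) a(2)) simp
  have "(\<integral>\<^sup>+x. norm (a x * h x) \<partial>Pnu W) =
      (\<integral>\<^sup>+u. (\<integral>\<^sup>+y. norm (a (merge I (W - I) (u, y)) * h (merge I (W - I) (u, y))) \<partial>Pnu (W - I)) \<partial>Pnu I)"
    using P.product_nn_integral_fold[OF disj fin, of "\<lambda>x. ennreal (norm (a x * h x))"] a h WI by simp
  also have "\<dots> = (\<integral>\<^sup>+u. norm (a u * integrate_out \<nu> W I h u) \<partial>Pnu I)"
  proof (rule nn_integral_cong_AE)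
    have "integrable (Pnu (I \<union> (W - I))) h" using h_int WI by simp
    from Fubini_merge(1)[OF disj fin this]
    show "AE u in Pnu I. (\<integral>\<^sup>+y. norm (a (merge I (W - I) (u, y)) * h (merge I (W - I) (u, y))) \<partial>Pnu (W - I))
        = norm (a u * integrate_out \<nu> W I h u)"
    proof eventually_elim
      case (elim u)
      have "(\<integral>\<^sup>+y. norm (a (merge I (W - I) (u, y)) * h (merge I (W - I) (u, y))) \<partial>Pnu (W - I))
          = (\<integral>\<^sup>+y. ennreal \<bar>a u\<bar> * ennreal (h (merge I (W - I) (u, y))) \<partial>Pnu (W - I))"
        unfolding a_merge using h_nonneg by (simp add: abs_mult ennreal_mult)
      also have "\<dots> = ennreal \<bar>a u\<bar> * (\<integral>\<^sup>+y. ennreal (h (merge I (W - I) (u, y))) \<partial>Pnu (W - I))"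
        by (rule nn_integral_cmult) (use elim in auto)
      also have "(\<integral>\<^sup>+y. ennreal (h (merge I (W - I) (u, y))) \<partial>Pnu (W - I)) = integrate_out \<nu> W I h u"
        unfolding integrate_out_def by (rule nn_integral_eq_integral) (use elim h_nonneg in auto)
      finally show ?case
        using integrate_out_nonneg[of h W I u] h_nonneg by (simp add: abs_mult ennreal_mult)
    qed
  qed
  also have "\<dots> < \<infinity>" using int unfolding integrable_iff_bounded by simp
  finally show ?thesis unfolding integrable_iff_bounded using a h by simp
qed

lemma measurable_cond_mean:
  assumes W: "finite W" and iN: "insert i N \<subseteq> W" "i \<notin> N"
    and k: "k \<in> borel_measurable (Pnu W)" and g: "g \<in> measurable M (Pnu N)"
  shows "(\<lambda>x. cond_mean \<nu> W i N k (g x)) \<in> borel_measurable M"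
proof -
  have "(\<lambda>(x, t). (g x)(i := t)) \<in> measurable (M \<Otimes>\<^sub>M \<nu>) (Pnu (insert i N))"
    using g by measurable
  from measurable_integrate_out[OF W iN(1) k this]
  have num [measurable]: "(\<lambda>p. integrate_out \<nu> W (insert i N) k ((g (fst p))(i := snd p)))
      \<in> borel_measurable (M \<Otimes>\<^sub>M \<nu>)"
    by (simp add: case_prod_beta)
  have den [measurable]: "(\<lambda>p. integrate_out \<nu> W N k (g (fst p))) \<in> borel_measurable (M \<Otimes>\<^sub>M \<nu>)"
    by (rule measurable_integrate_out[OF W _ k]) (use iN g in auto)
  have "integrate_out \<nu> W N k ((g x)(i := t)) = integrate_out \<nu> W N k (g x)" for x t
    by (rule integrate_out_cong_restrict) (use iN in \<open>auto simp: fun_eq_iff restrict_def\<close>)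
  moreover have "(\<lambda>p. snd p * integrate_out \<nu> W (insert i N) k ((g (fst p))(i := snd p))
                        / integrate_out \<nu> W N k (g (fst p)))
      \<in> borel_measurable (M \<Otimes>\<^sub>M \<nu>)"
    by measurable
  ultimately show ?thesis
    unfolding cond_mean_def
    by (intro sigma_finite_measure.borel_measurable_lebesgue_integral[OF nu_sigma_finite])
       (simp add: case_prod_beta)
qed

lemma AE_slice_first_moment:
  assumes V: "finite V" and Ns: "N \<inter> s = {}" "N \<union> s \<subseteq> V" and i: "i \<in> s"
    and k: "k \<in> borel_measurable (Pnu V)" "integrable (Pnu V) (\<lambda>x. x i * k x)"
  shows "AE u in Pnu N. (\<integral>v. merge N s (u, v) i * integrate_out \<nu> V (N \<union> s) k (merge N s (u, v)) \<partial>Pnu s)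
                       = (\<integral>t. t * integrate_out \<nu> V (insert i N) k (u(i := t)) \<partial>\<nu>)"
proof -
  have Ns': "N \<subseteq> N \<union> s" "N \<union> s - N = s" "i \<in> N \<union> s" and iN: "i \<notin> N" "insert i N \<subseteq> V"
    using Ns i by auto
  have "AE u in Pnu N. integrate_out \<nu> (N \<union> s) N (\<lambda>x. x i * integrate_out \<nu> V (N \<union> s) k x) u
      = integrate_out \<nu> V N (\<lambda>x. x i * k x) u"
    using integrate_out_integrate_out[OF V Ns'(1) Ns(2) _ k(2)] Ns'(3) by auto
  moreover have "AE u in Pnu N.
      integrate_out \<nu> (insert i N) N (\<lambda>x. x i * integrate_out \<nu> V (insert i N) k x) u
      = integrate_out \<nu> V N (\<lambda>x. x i * k x) u"
    using integrate_out_integrate_out[OF V _ iN(2) _ k(2), of N] by auto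
  ultimately show ?thesis
    using AE_space
  proof eventually_elim
    case (elim u)
    have "(\<lambda>x. x i * integrate_out \<nu> V (insert i N) k x) \<in> borel_measurable (Pnu (insert i N))"
      using measurable_coordinate measurable_integrate_out[OF V iN(2) k(1) measurable_ident_sets[OF refl]]
      by simp
    from integrate_out_singleton[OF iN(1) elim(3) this] elim(1,2) show ?case
      by (simp add: integrate_out_def[of _ "N \<union> s" N] Ns'(2))
  qed
qed

lemma AE_slice_same_ratio:
  assumes V: "finite V" and Ns: "N \<inter> s = {}" "N \<union> s \<subseteq> V"
    and nontrivial: "emeasure \<nu> (space \<nu>) \<noteq> 0"
    and same_ratio: "AE x in Pnu V. integrate_out \<nu> V (N \<union> s) h x / integrate_out \<nu> V N h x
                                   = integrate_out \<nu> V (N \<union> s) k x / integrate_out \<nu> V N k x"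
  shows "AE u in Pnu N. AE v in Pnu s.
           integrate_out \<nu> V (N \<union> s) h (merge N s (u, v)) / integrate_out \<nu> V N h u
           = integrate_out \<nu> V (N \<union> s) k (merge N s (u, v)) / integrate_out \<nu> V N k u"
proof -
  have fin: "finite N" "finite s" using V Ns finite_subset by auto
  have "integrate_out \<nu> V N g (restrict x (N \<union> s)) = integrate_out \<nu> V N g x" for g x
    by (rule integrate_out_cong_restrict) (auto simp: fun_eq_iff restrict_def)
  with same_ratio have "AE x in Pnu V. (\<lambda>w. integrate_out \<nu> V (N \<union> s) h w / integrate_out \<nu> V N h w
      = integrate_out \<nu> V (N \<union> s) k w / integrate_out \<nu> V N k w) (restrict x (N \<union> s))"
    by simp
  then have "AE w in Pnu (N \<union> s). integrate_out \<nu> V (N \<union> s) h w / integrate_out \<nu> V N h w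
      = integrate_out \<nu> V (N \<union> s) k w / integrate_out \<nu> V N k w"
    by (rule AE_restrict[OF V Ns(2) nontrivial])
  then have "AE u in Pnu N. AE v in Pnu s.
      integrate_out \<nu> V (N \<union> s) h (merge N s (u, v)) / integrate_out \<nu> V N h (merge N s (u, v))
      = integrate_out \<nu> V (N \<union> s) k (merge N s (u, v)) / integrate_out \<nu> V N k (merge N s (u, v))"
    by (rule AE_merge[OF Ns(1) fin])
  moreover have "integrate_out \<nu> V N g (merge N s (u, v)) = integrate_out \<nu> V N g u" for g u v
    by (rule integrate_out_cong_restrict) (use Ns in simp)
  ultimately show ?thesis by (simp only:)
qed

lemma AE_slice_integral_eq_cond_mean:
  fixes h k :: "(nat \<Rightarrow> real) \<Rightarrow> real"
  assumes V: "finite V" and Ns: "N \<inter> s = {}" "N \<union> s \<subseteq> V" and i: "i \<in> s"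
    and h: "h \<in> borel_measurable (Pnu V)" "\<And>x. h x \<ge> 0" "integrable (Pnu V) h"
    and k: "k \<in> borel_measurable (Pnu V)" "integrable (Pnu V) (\<lambda>x. x i * k x)"
    and nontrivial: "emeasure \<nu> (space \<nu>) \<noteq> 0"
    and same_ratio: "AE x in Pnu V. integrate_out \<nu> V (N \<union> s) h x / integrate_out \<nu> V N h x
                                   = integrate_out \<nu> V (N \<union> s) k x / integrate_out \<nu> V N k x"
  shows "AE u in Pnu N. (\<integral>v. merge N s (u, v) i * integrate_out \<nu> V (N \<union> s) h (merge N s (u, v)) \<partial>Pnu s)
                       = cond_mean \<nu> V i N k u * integrate_out \<nu> V N h u"
proof -
  have Ns': "N \<subseteq> N \<union> s" "N \<union> s - N = s" "i \<in> N \<union> s" "i \<notin> N" using Ns i by auto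
  have "AE u in Pnu N. integrable (Pnu s) (\<lambda>v. integrate_out \<nu> V (N \<union> s) h (merge N s (u, v)))
      \<and> (\<integral>v. integrate_out \<nu> V (N \<union> s) h (merge N s (u, v)) \<partial>Pnu s) = integrate_out \<nu> V N h u"
    using integrate_out_integrate_out[OF V Ns'(1) Ns(2), of "\<lambda>_. 1" h] h(3)
    by (simp add: Ns'(2) integrate_out_def[of _ "N \<union> s" N])
  with AE_slice_same_ratio[OF V Ns nontrivial same_ratio] AE_slice_first_moment[OF V Ns i k] AE_space
  show ?thesis
  proof eventually_elim
    case (elim u)
    have merge: "(\<lambda>v. merge N s (u, v)) \<in> measurable (Pnu s) (Pnu (N \<union> s))"
      using measurable_compose[OF measurable_Pair1' measurable_merge] elim(3) by blast
    have "(\<integral>v. merge N s (u, v) i * integrate_out \<nu> V (N \<union> s) h (merge N s (u, v)) \<partial>Pnu s)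
        = integrate_out \<nu> V N h u / integrate_out \<nu> V N k u
          * (\<integral>v. merge N s (u, v) i * integrate_out \<nu> V (N \<union> s) k (merge N s (u, v)) \<partial>Pnu s)"
    proof (rule integral_mult_eq_of_AE_ratio[OF _ _ _ elim(1)])
      show "(\<lambda>v. merge N s (u, v) i) \<in> borel_measurable (Pnu s)"
        using measurable_compose[OF merge measurable_coordinate[OF Ns'(3)]] .
    qed (use elim(4) integrate_out_nonneg h(2) measurable_integrate_out[OF V Ns(2) h(1) merge]
          measurable_integrate_out[OF V Ns(2) k(1) merge] in auto)
    moreover have "integrate_out \<nu> V N k (u(i := t)) = integrate_out \<nu> V N k u" for t
      by (rule integrate_out_cong_restrict) (use Ns'(4) in \<open>auto simp: fun_eq_iff restrict_def\<close>)
    ultimately show ?case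
      using elim(2) unfolding cond_mean_def by simp
  qed
qed

lemma integral_coordinate_eq_integral_cond_mean:
  fixes h k :: "(nat \<Rightarrow> real) \<Rightarrow> real"
  assumes V: "finite V" and Ns: "N \<inter> s = {}" "N \<union> s \<subseteq> V" and i: "i \<in> s"
    and h: "h \<in> borel_measurable (Pnu V)" "\<And>x. h x \<ge> 0" "integrable (Pnu V) h"
      "integrable (Pnu V) (\<lambda>x. x i * h x)"
    and k: "k \<in> borel_measurable (Pnu V)" "integrable (Pnu V) (\<lambda>x. x i * k x)"
    and nontrivial: "emeasure \<nu> (space \<nu>) \<noteq> 0"
    and same_ratio: "AE x in Pnu V. integrate_out \<nu> V (N \<union> s) h x / integrate_out \<nu> V N h x
                                   = integrate_out \<nu> V (N \<union> s) k x / integrate_out \<nu> V N k x"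
  shows "integrable (Pnu V) (\<lambda>x. cond_mean \<nu> V i N k x * h x)"
    and "(\<integral>x. x i * h x \<partial>Pnu V) = (\<integral>x. cond_mean \<nu> V i N k x * h x \<partial>Pnu V)"
proof -
  define m where "m = cond_mean \<nu> V i N k"
  define \<Phi> where
    "\<Phi> u = (\<integral>v. merge N s (u, v) i * integrate_out \<nu> V (N \<union> s) h (merge N s (u, v)) \<partial>Pnu s)" for u
  have NV: "N \<subseteq> V" "N \<union> s \<subseteq> V" "insert i N \<subseteq> V" "i \<notin> N" and fin: "finite N" "finite s"
    using Ns i V finite_subset by auto
  have m_restrict: "m x = m (restrict x N)" for x
    unfolding m_def by (simp add: cond_mean_restrict)
  have m_meas: "m \<in> borel_measurable (Pnu N)" "m \<in> borel_measurable (Pnu V)"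
    using measurable_cond_mean[OF V NV(3,4) k(1) measurable_ident_sets[OF refl]]
      measurable_cond_mean[OF V NV(3,4) k(1) measurable_restrict_subset[OF NV(1)]]
    unfolding m_def by (simp_all add: cond_mean_restrict)
  from integral_integrate_out[OF V NV(2), of "\<lambda>x. x i" h] h(4) i
  have int_Ns: "integrable (Pnu (N \<union> s)) (\<lambda>u. u i * integrate_out \<nu> V (N \<union> s) h u)"
    and fold_Ns: "(\<integral>x. x i * h x \<partial>Pnu V) = (\<integral>u. u i * integrate_out \<nu> V (N \<union> s) h u \<partial>Pnu (N \<union> s))"
    by auto
  have int_\<Phi>: "integrable (Pnu N) \<Phi>"
    and fold_N: "(\<integral>u. u i * integrate_out \<nu> V (N \<union> s) h u \<partial>Pnu (N \<union> s)) = (\<integral>u. \<Phi> u \<partial>Pnu N)"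
    using Fubini_merge(2,3)[OF Ns(1) fin int_Ns] unfolding \<Phi>_def by auto
  have \<Phi>_eq: "AE u in Pnu N. \<Phi> u = m u * integrate_out \<nu> V N h u"
    unfolding \<Phi>_def m_def
    by (rule AE_slice_integral_eq_cond_mean[OF V Ns i h(1-3) k nontrivial same_ratio])
  have meas_N: "(\<lambda>u. m u * integrate_out \<nu> V N h u) \<in> borel_measurable (Pnu N)"
    using m_meas(1) measurable_integrate_out[OF V NV(1) h(1) measurable_ident_sets[OF refl]] by simp
  have int_N: "integrable (Pnu N) (\<lambda>u. m u * integrate_out \<nu> V N h u)"
    using integrable_cong_AE[OF borel_measurable_integrable[OF int_\<Phi>] meas_N \<Phi>_eq] int_\<Phi> by simp
  show int_V: "integrable (Pnu V) (\<lambda>x. cond_mean \<nu> V i N k x * h x)"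
    using integrable_of_integrable_integrate_out[OF V NV(1) h(1-3) m_meas(2) m_restrict int_N]
    unfolding m_def .
  have "(\<integral>x. x i * h x \<partial>Pnu V) = (\<integral>u. \<Phi> u \<partial>Pnu N)"
    using fold_Ns fold_N by simp
  also have "\<dots> = (\<integral>u. m u * integrate_out \<nu> V N h u \<partial>Pnu N)"
    by (rule integral_cong_AE[OF borel_measurable_integrable[OF int_\<Phi>] meas_N \<Phi>_eq])
  also have "\<dots> = (\<integral>x. m x * h x \<partial>Pnu V)"
    using integral_integrate_out(2)[OF V NV(1), of m h, OF m_restrict] int_V unfolding m_def by simp
  finally show "(\<integral>x. x i * h x \<partial>Pnu V) = (\<integral>x. cond_mean \<nu> V i N k x * h x \<partial>Pnu V)"
    unfolding m_def .
qed

end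

lemma reachable_within_comp_of:
  assumes "(ind_adj G X)\<^sup>*\<^sup>* c a" "(ind_adj G X)\<^sup>*\<^sup>* a b"
  shows "(ind_adj G (comp_of G X c))\<^sup>*\<^sup>* a b"
  using assms(2)
proof (induction rule: rtranclp_induct)
  case (step y z)
  have "(ind_adj G X)\<^sup>*\<^sup>* c y" "(ind_adj G X)\<^sup>*\<^sup>* c z"
    using assms(1) step(1,2) by (auto intro: rtranclp_trans)
  with step(2) have "ind_adj G (comp_of G X c) y z"
    unfolding ind_adj_def comp_of_def by auto
  with step(3) show ?case by simp
qed simp

lemma conn_set_comp_of:
  assumes sym: "\<And>u v. G u v \<Longrightarrow> G v u" and c: "c \<in> X"
  shows "conn_set G (comp_of G X c)"
proof -
  let ?R = "ind_adj G (comp_of G X c)"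
  have "symp ?R\<^sup>*\<^sup>*"
    by (rule symp_rtranclp) (use sym in \<open>auto simp: symp_def ind_adj_def\<close>)
  moreover have "?R\<^sup>*\<^sup>* c u" if "u \<in> comp_of G X c" for u
    using reachable_within_comp_of[of G X c c u] that unfolding comp_of_def by auto
  moreover have "c \<in> comp_of G X c" using c unfolding comp_of_def by simp
  ultimately show ?thesis
    unfolding conn_set_def by (metis empty_iff rtranclp_trans sympD)
qed

lemma psi_conn_set:
  assumes "\<And>u v. G u v \<Longrightarrow> G v u" and "1 \<in> X"
  shows "conn_set G (psi G X)" and "1 \<in> psi G X" and "psi G X \<subseteq> X"
  using conn_set_comp_of[OF assms] assms(2) unfolding psi_def comp_of_def by auto

lemma one_mem_if_conn_set_psi: "conn_set G (psi G X) \<Longrightarrow> 1 \<in> X"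
  unfolding psi_def conn_set_def by (auto split: if_splits)

lemma sum_missing_outcome_group_psi:
  fixes g :: "nat set \<Rightarrow> 'a :: comm_monoid_add"
  assumes "finite V" "1 \<in> V" "\<And>u v. G u v \<Longrightarrow> G v u"
  shows "(\<Sum>r\<in>{r\<in>Pow V. 1 \<notin> r}. g r)
       = (\<Sum>s\<in>{s. s \<subseteq> V \<and> 1 \<in> s \<and> conn_set G s}. \<Sum>r\<in>{r\<in>Pow V. psi G (V - r) = s}. g r)"
proof -
  let ?S = "{s. s \<subseteq> V \<and> 1 \<in> s \<and> conn_set G s}"
  have "psi G (V - r) \<in> ?S" if "r \<in> Pow V" "1 \<notin> r" for r
    using psi_conn_set[of G "V - r", OF assms(3)] assms(2) that by auto
  then have "(\<lambda>r. psi G (V - r)) ` {r\<in>Pow V. 1 \<notin> r} \<subseteq> ?S"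
    by blast
  then have "(\<Sum>r\<in>{r\<in>Pow V. 1 \<notin> r}. g r)
      = (\<Sum>s\<in>?S. \<Sum>r\<in>{r. r \<in> {r\<in>Pow V. 1 \<notin> r} \<and> psi G (V - r) = s}. g r)"
    by (intro sum.group[symmetric]) (use assms(1) in auto)
  also have "\<dots> = (\<Sum>s\<in>?S. \<Sum>r\<in>{r\<in>Pow V. psi G (V - r) = s}. g r)"
    by (intro sum.cong refl arg_cong[where f = "sum g"]) (auto dest: one_mem_if_conn_set_psi)
  finally show ?thesis .
qed

lemma mreg_eq_cond_mean:
  "mreg V \<nu> f G s = cond_mean \<nu> V 1 (nbr V G s) (\<lambda>x. \<Sum>r\<in>obs_all V (s \<union> nbr V G s). f x r)"
  by (simp add: fun_eq_iff mreg_def cond_mean_def cond_dens_def marg_def integrate_out_def Let_def)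

lemma cond_dens_eq_integrate_out:
  "cond_dens V \<nu> f B A E = (\<lambda>x. integrate_out \<nu> V (A \<union> B) (\<lambda>y. \<Sum>r\<in>E. f y r) x
                                 / integrate_out \<nu> V A (\<lambda>y. \<Sum>r\<in>E. f y r) x)"
  by (simp add: fun_eq_iff cond_dens_def marg_def integrate_out_def)

locale pai_model = product_borel +
  fixes V :: "nat set" and f :: "(nat \<Rightarrow> real) \<Rightarrow> nat set \<Rightarrow> real" and G :: "nat \<Rightarrow> nat \<Rightarrow> bool"
  assumes finite_V: "finite V" and outcome_in_V: "1 \<in> V"
    and G_sym: "\<And>u v. G u v \<Longrightarrow> G v u"
    and f_meas: "\<And>r. (\<lambda>x. f x r) \<in> borel_measurable (PiM V (\<lambda>_. \<nu>))"
    and f_nonneg: "\<And>x r. f x r \<ge> 0"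
    and f_zero: "\<And>x r. \<not> r \<subseteq> V \<Longrightarrow> f x r = 0"
    and f_int: "integrable (PiM V (\<lambda>_. \<nu>)) (\<lambda>x. \<Sum>r\<in>Pow V. f x r)"
    and X1_int: "integrable (PiM V (\<lambda>_. \<nu>)) (\<lambda>x. \<bar>x 1\<bar> * (\<Sum>r\<in>Pow V. f x r))"
    and nontrivial: "emeasure \<nu> (space \<nu>) \<noteq> 0"
    and pai: "PAI V \<nu> f G"
begin

lemma sum_patterns_nonneg: "(\<Sum>r\<in>Pow V. f x r) \<ge> 0"
  by (simp add: sum_nonneg f_nonneg)

lemma f_le_sum: "f x r \<le> (\<Sum>r\<in>Pow V. f x r)"
proof (cases "r \<subseteq> V")
  case True
  then show ?thesis by (intro member_le_sum) (use f_nonneg finite_V in auto)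
next
  case False
  then show ?thesis using f_zero f_nonneg by (simp add: sum_nonneg)
qed

lemma integrable_pattern: "integrable (Pnu V) (\<lambda>x. f x r)"
  by (rule Bochner_Integration.integrable_bound[OF f_int f_meas])
     (use f_le_sum f_nonneg sum_patterns_nonneg in auto)

lemma integrable_X1_pattern: "integrable (Pnu V) (\<lambda>x. x 1 * f x r)"
proof (rule Bochner_Integration.integrable_bound[OF X1_int])
  show "(\<lambda>x. x 1 * f x r) \<in> borel_measurable (Pnu V)"
    using measurable_coordinate[OF outcome_in_V] f_meas by simp
  show "AE x in Pnu V. norm (x 1 * f x r) \<le> norm (\<bar>x 1\<bar> * (\<Sum>r\<in>Pow V. f x r))"
    using f_le_sum f_nonneg sum_patterns_nonneg by (auto simp: abs_mult intro!: mult_left_mono)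
qed

lemma AE_pattern_eq_0:
  assumes "\<not> pos_pattern V \<nu> f r"
  shows "AE x in Pnu V. f x r = 0"
proof -
  have "(\<integral>\<^sup>+x. ennreal (f x r) \<partial>Pnu V) = 0"
    using assms unfolding pos_pattern_def dataM_def by (simp add: zero_less_iff_neq_zero)
  then have "AE x in Pnu V. ennreal (f x r) = 0"
    using nn_integral_0_iff_AE[of "\<lambda>x. ennreal (f x r)" "Pnu V"] f_meas by simp
  then show ?thesis
    by eventually_elim (use f_nonneg in \<open>auto intro: antisym\<close>)
qed

lemma measurable_mreg:
  assumes "1 \<in> s"
  shows "mreg V \<nu> f G s \<in> borel_measurable (Pnu V)"
proof -
  have "insert 1 (nbr V G s) \<subseteq> V" "1 \<notin> nbr V G s"
    using assms outcome_in_V unfolding nbr_def by auto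
  from measurable_cond_mean[OF finite_V this _ measurable_restrict_subset] f_meas
  show ?thesis
    unfolding mreg_eq_cond_mean by (simp add: cond_mean_restrict nbr_def)
qed

lemma pattern_regression_adjustment:
  assumes r: "r \<subseteq> V" "1 \<notin> r" and s: "psi G (V - r) = s"
  shows "integrable (Pnu V) (\<lambda>x. mreg V \<nu> f G s x * f x r)"
    and "(\<integral>x. x 1 * f x r \<partial>Pnu V) = (\<integral>x. mreg V \<nu> f G s x * f x r \<partial>Pnu V)"
proof -
  define N where "N = nbr V G s"
  define k where "k x = (\<Sum>r\<in>obs_all V (s \<union> N). f x r)" for x
  have "1 \<in> V - r" using r outcome_in_V by auto
  note s_props = psi_conn_set[of G "V - r", OF G_sym this, unfolded s]
  have Ns: "N \<inter> s = {}" "N \<union> s \<subseteq> V"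
    using s_props(3) unfolding N_def nbr_def by auto
  have "finite (obs_all V (s \<union> N))"
    using finite_V unfolding obs_all_def by (auto intro: finite_subset[of _ "Pow V"])
  then have k: "k \<in> borel_measurable (Pnu V)" "integrable (Pnu V) (\<lambda>x. x 1 * k x)"
    unfolding k_def using f_meas integrable_X1_pattern by (auto simp: sum_distrib_left)
  have mreg: "mreg V \<nu> f G s = cond_mean \<nu> V 1 N k"
    unfolding mreg_eq_cond_mean N_def k_def ..
  have "integrable (Pnu V) (\<lambda>x. mreg V \<nu> f G s x * f x r)
      \<and> (\<integral>x. x 1 * f x r \<partial>Pnu V) = (\<integral>x. mreg V \<nu> f G s x * f x r \<partial>Pnu V)"
  proof (cases "pos_pattern V \<nu> f r")
    case True
    have "s \<in> components G (V - r)"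
      unfolding components_def s[symmetric] psi_def using \<open>1 \<in> V - r\<close> by simp
    with pai r True
    have "AE x in Pnu V. cond_dens V \<nu> f s N {r} x = cond_dens V \<nu> f s N (obs_all V (s \<union> N)) x"
      unfolding PAI_def N_def dataM_def by blast
    then have same_ratio: "AE x in Pnu V.
        integrate_out \<nu> V (N \<union> s) (\<lambda>x. f x r) x / integrate_out \<nu> V N (\<lambda>x. f x r) x
        = integrate_out \<nu> V (N \<union> s) k x / integrate_out \<nu> V N k x"
      unfolding cond_dens_eq_integrate_out k_def[abs_def] by simp
    from integral_coordinate_eq_integral_cond_mean[OF finite_V Ns s_props(2) f_meas f_nonneg
        integrable_pattern integrable_X1_pattern k nontrivial same_ratio]
    show ?thesis unfolding mreg by simp
  next
    case False
    note zero = AE_pattern_eq_0[OF False]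
    have "integrable (Pnu V) (\<lambda>x. mreg V \<nu> f G s x * f x r)"
      by (rule integrable_cong_AE_imp[of _ "\<lambda>_. 0"])
         (use zero measurable_mreg[OF s_props(2)] f_meas in auto)
    moreover have "(\<integral>x. x 1 * f x r \<partial>Pnu V) = 0" "(\<integral>x. mreg V \<nu> f G s x * f x r \<partial>Pnu V) = 0"
      by (rule integral_eq_zero_AE, use zero in auto)+
    ultimately show ?thesis by simp
  qed
  then show "integrable (Pnu V) (\<lambda>x. mreg V \<nu> f G s x * f x r)"
    and "(\<integral>x. x 1 * f x r \<partial>Pnu V) = (\<integral>x. mreg V \<nu> f G s x * f x r \<partial>Pnu V)"
    by simp_all
qed

lemma integral_X1_psi_class:
  assumes "conn_set G s"
  shows "(\<Sum>r\<in>{r\<in>Pow V. psi G (V - r) = s}. \<integral>x. x 1 * f x r \<partial>Pnu V)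
       = (\<integral>x. mreg V \<nu> f G s x * (\<Sum>r\<in>{r\<in>Pow V. psi G (V - r) = s}. f x r) \<partial>Pnu V)"
proof -
  let ?C = "{r\<in>Pow V. psi G (V - r) = s}"
  have member: "r \<subseteq> V" "1 \<notin> r" "psi G (V - r) = s" if "r \<in> ?C" for r
    using that one_mem_if_conn_set_psi[of G "V - r"] assms by auto
  have "(\<Sum>r\<in>?C. \<integral>x. x 1 * f x r \<partial>Pnu V) = (\<Sum>r\<in>?C. \<integral>x. mreg V \<nu> f G s x * f x r \<partial>Pnu V)"
    by (rule sum.cong[OF refl], rule pattern_regression_adjustment(2)[OF member])
  also have "\<dots> = (\<integral>x. (\<Sum>r\<in>?C. mreg V \<nu> f G s x * f x r) \<partial>Pnu V)"
    by (rule Bochner_Integration.integral_sum[symmetric])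
       (rule pattern_regression_adjustment(1)[OF member])
  finally show ?thesis by (simp add: sum_distrib_left)
qed

lemma integral_X1_decomposition:
  "(\<integral>x. x 1 * (\<Sum>r\<in>Pow V. f x r) \<partial>Pnu V) =
     (\<integral>x. x 1 * (\<Sum>r\<in>{r\<in>Pow V. 1 \<in> r}. f x r) \<partial>Pnu V)
     + (\<Sum>s\<in>{s. s \<subseteq> V \<and> 1 \<in> s \<and> conn_set G s}.
          \<integral>x. mreg V \<nu> f G s x * (\<Sum>r\<in>{r\<in>Pow V. psi G (V - r) = s}. f x r) \<partial>Pnu V)"
proof -
  define R1 where "R1 = {r\<in>Pow V. 1 \<in> r}"
  define R0 where "R0 = {r\<in>Pow V. 1 \<notin> r}"
  have fin: "finite R1" "finite R0" using finite_V unfolding R1_def R0_def by auto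
  have "Pow V = R1 \<union> R0" "R1 \<inter> R0 = {}" unfolding R1_def R0_def by auto
  then have "(\<Sum>r\<in>Pow V. f x r) = (\<Sum>r\<in>R1. f x r) + (\<Sum>r\<in>R0. f x r)" for x
    using sum.union_disjoint[OF fin] by simp
  then have split: "x 1 * (\<Sum>r\<in>Pow V. f x r) = x 1 * (\<Sum>r\<in>R1. f x r) + (\<Sum>r\<in>R0. x 1 * f x r)" for x
    by (simp add: distrib_left sum_distrib_left)
  have "integrable (Pnu V) (\<lambda>x. x 1 * (\<Sum>r\<in>R1. f x r))"
    unfolding sum_distrib_left by (intro Bochner_Integration.integrable_sum integrable_X1_pattern)
  then have "(\<integral>x. x 1 * (\<Sum>r\<in>Pow V. f x r) \<partial>Pnu V)
      = (\<integral>x. x 1 * (\<Sum>r\<in>R1. f x r) \<partial>Pnu V) + (\<integral>x. (\<Sum>r\<in>R0. x 1 * f x r) \<partial>Pnu V)"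
    unfolding split
    by (intro Bochner_Integration.integral_add Bochner_Integration.integrable_sum integrable_X1_pattern)
  also have "(\<integral>x. (\<Sum>r\<in>R0. x 1 * f x r) \<partial>Pnu V) = (\<Sum>r\<in>R0. \<integral>x. x 1 * f x r \<partial>Pnu V)"
    by (intro Bochner_Integration.integral_sum integrable_X1_pattern)
  also have "\<dots> = (\<Sum>s\<in>{s. s \<subseteq> V \<and> 1 \<in> s \<and> conn_set G s}.
      \<Sum>r\<in>{r\<in>Pow V. psi G (V - r) = s}. \<integral>x. x 1 * f x r \<partial>Pnu V)"
    unfolding R0_def by (rule sum_missing_outcome_group_psi[OF finite_V outcome_in_V G_sym])
  also have "\<dots> = (\<Sum>s\<in>{s. s \<subseteq> V \<and> 1 \<in> s \<and> conn_set G s}.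
      \<integral>x. mreg V \<nu> f G s x * (\<Sum>r\<in>{r\<in>Pow V. psi G (V - r) = s}. f x r) \<partial>Pnu V)"
    by (rule sum.cong[OF refl], rule integral_X1_psi_class) simp
  finally show ?thesis unfolding R1_def .
qed

end

theorem mainTheorem7:
  fixes d :: nat and \<nu> :: "real measure"
    and f :: "(nat \<Rightarrow> real) \<Rightarrow> nat set \<Rightarrow> real"
    and G :: "nat \<Rightarrow> nat \<Rightarrow> bool"
  defines "V \<equiv> {1..d}"
  assumes d_pos: "1 \<le> d"
    and nu_sets: "sets \<nu> = sets borel"
    and nu_sfin: "sigma_finite_measure \<nu>"
    and G_in: "\<And>u v. G u v \<Longrightarrow> u \<in> V \<and> v \<in> V"
    and G_sym: "\<And>u v. G u v \<Longrightarrow> G v u"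
    and G_irrefl: "\<And>u. \<not> G u u"
    and f_meas: "\<And>r. (\<lambda>x. f x r) \<in> borel_measurable (dataM V \<nu>)"
    and f_nonneg: "\<And>x r. f x r \<ge> 0"
    and f_zero: "\<And>x r. \<not> r \<subseteq> V \<Longrightarrow> f x r = 0"
    and f_prob: "(\<integral>x. (\<Sum>r\<in>Pow V. f x r) \<partial>dataM V \<nu>) = 1"
    and f_int: "integrable (dataM V \<nu>) (\<lambda>x. (\<Sum>r\<in>Pow V. f x r))"
    and positivity: "\<And>x. x \<in> space (dataM V \<nu>) \<Longrightarrow> f x V > 0"
    and X1_int: "integrable (dataM V \<nu>) (\<lambda>x. \<bar>x 1\<bar> * (\<Sum>r\<in>Pow V. f x r))"
    and mmg: "MMG V \<nu> f G"
    and pai: "PAI V \<nu> f G"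
  shows "(\<forall>s r. conn_set G s \<and> s \<subseteq> V \<and> 1 \<in> s \<and> r \<subseteq> V \<and> 1 \<notin> r \<and> psi G (V - r) = s \<longrightarrow>
            (\<integral>x. x 1 * f x r \<partial>dataM V \<nu>) = (\<integral>x. mreg V \<nu> f G s x * f x r \<partial>dataM V \<nu>))
       \<and> (\<integral>x. x 1 * (\<Sum>r\<in>Pow V. f x r) \<partial>dataM V \<nu>) =
           (\<integral>x. x 1 * (\<Sum>r\<in>{r\<in>Pow V. 1 \<in> r}. f x r) \<partial>dataM V \<nu>)
           + (\<Sum>s\<in>{s. s \<subseteq> V \<and> 1 \<in> s \<and> conn_set G s}.
                (\<integral>x. mreg V \<nu> f G s x * (\<Sum>r\<in>{r\<in>Pow V. psi G (V - r) = s}. f x r) \<partial>dataM V \<nu>))"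
proof -
  interpret product_borel \<nu> using nu_sfin nu_sets by (rule product_borel.intro)
  have V: "finite V" "1 \<in> V" "V \<noteq> {}" using d_pos unfolding V_def by auto
  have "emeasure \<nu> (space \<nu>) \<noteq> 0"
    by (rule nu_nontrivial_if_integral_nonzero[OF V(1,3), of "\<lambda>x. \<Sum>r\<in>Pow V. f x r"])
       (use f_prob in \<open>simp add: dataM_def\<close>)
  then interpret pai_model \<nu> V f G
    using V G_sym f_meas f_nonneg f_zero f_int X1_int pai unfolding dataM_def by unfold_locales
  show ?thesis
    using pattern_regression_adjustment(2) integral_X1_decomposition unfolding dataM_def by blast
qed

end
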